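(* Let $n > d \geq 1$, let $\mathbf{U} \in \mathbb{R}^{n\times d}$ have orthonormal columns, and let $\varsigma^2 > 0$. Let $Q$ be the distribution of $\mathbf{y} = \mathbf{U}\mathbf{c} + \mathbf{z}$, where $\mathbf{c}\sim\mathcal{N}(0,\mathbf{I}_d)$ and $\mathbf{z}\sim\mathcal{N}(0,\varsigma^2\mathbf{I}_n)$ are independent. For $\alpha\in[0,1]$ define the self-supervised loss $$L_{SS}(\alpha,\mathbf{U},\mathbf{y}) = \|\mathbf{y} - \alpha\mathbf{U}\mathbf{U}^T\mathbf{y}\|_2^2 + \frac{2\alpha d}{n-d}\,\|(\mathbf{I}_n - \mathbf{U}\mathbf{U}^T)\mathbf{y}\|_2^2.$$ Then, for fixed $\mathbf{U}$, the expectation $\mathbb{E}_Q[L_{SS}(\alpha,\mathbf{U},\mathbf{y})]$ is minimized over $\alpha$ by $\alpha = \frac{1}{1+\varsigma^2}$.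
   Context: $\mathbf{I}_n$ denotes the $n\times n$ identity matrix; the expectation is over $\mathbf{y}\sim Q$. *)

theory Defs
  imports "HOL-Probability.Probability"
begin

definition gauss_vec :: "real \<Rightarrow> ('k::finite \<Rightarrow> real) measure" where
  "gauss_vec \<sigma> = PiM UNIV (\<lambda>_. density lborel (normal_density 0 \<sigma>))"

definition Q_dist :: "real^'d::finite^'n::finite \<Rightarrow> real \<Rightarrow> (real^'n) measure" where
  "Q_dist U s2 =
     distr ((gauss_vec 1 :: ('d \<Rightarrow> real) measure) \<Otimes>\<^sub>M (gauss_vec (sqrt s2) :: ('n \<Rightarrow> real) measure))
       borel (\<lambda>(c, z). U *v (\<chi> i. c i) + (\<chi> i. z i))"

definition L_SS :: "real \<Rightarrow> real^'d::finite^'n::finite \<Rightarrow> real^'n \<Rightarrow> real" where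
  "L_SS \<alpha> U y =
     (norm (y - \<alpha> *\<^sub>R ((U ** transpose U) *v y)))\<^sup>2
     + (2 * \<alpha> * real CARD('d) / (real CARD('n) - real CARD('d)))
       * (norm ((mat 1 - U ** transpose U) *v y))\<^sup>2"

end

theory Submission
  imports Defs
begin

text \<open>Write \<open>y = U c + z\<close> and \<open>P = U U\<^sup>T\<close>. Since the coordinates of \<open>c\<close> and \<open>z\<close> are
  uncorrelated with variances \<open>1\<close> and \<open>\<varsigma>\<^sup>2\<close>, every matrix \<open>M\<close> satisfies
  \<open>E |M y|\<^sup>2 = |M U|\<^sup>2 + \<varsigma>\<^sup>2 |M|\<^sup>2\<close> in the Frobenius norm, which is the norm Isabelle puts on
  \<open>real^'m^'n\<close>. As \<open>P\<close> is the orthogonal projection onto the \<open>d\<close>-dimensional column space of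
  \<open>U\<close>, for \<open>M = I - \<alpha> P\<close> this gives \<open>(1 - \<alpha>)\<^sup>2 d + \<varsigma>\<^sup>2 (n - 2 \<alpha> d + \<alpha>\<^sup>2 d)\<close>, and the
  correction term of the loss contributes exactly \<open>2 \<alpha> d \<varsigma>\<^sup>2\<close>. Hence the expected loss is
  \<open>d ((1 - \<alpha>)\<^sup>2 + \<varsigma>\<^sup>2 \<alpha>\<^sup>2) + \<varsigma>\<^sup>2 n\<close>, a quadratic in \<open>\<alpha>\<close> minimised at \<open>1 / (1 + \<varsigma>\<^sup>2)\<close>.\<close>

abbreviation centered_normal :: "real \<Rightarrow> real measure" where
  "centered_normal \<sigma> \<equiv> density lborel (normal_density 0 \<sigma>)"

lemma
  assumes "\<sigma> > 0"
  shows integrable_centered_normal_id: "integrable (centered_normal \<sigma>) (\<lambda>x. x)"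
    and integral_centered_normal_id: "(\<integral>x. x \<partial>centered_normal \<sigma>) = 0"
proof -
  have h: "has_bochner_integral lborel (\<lambda>x. normal_density 0 \<sigma> x * x) 0"
    using normal_moment_nz_1[OF assms, of 0] .
  show "integrable (centered_normal \<sigma>) (\<lambda>x. x)"
    using h by (subst integrable_density) (auto simp: has_bochner_integral_iff)
  show "(\<integral>x. x \<partial>centered_normal \<sigma>) = 0"
    using h by (subst integral_density) (auto simp: has_bochner_integral_iff)
qed

lemma
  assumes "\<sigma> > 0"
  shows integrable_centered_normal_square: "integrable (centered_normal \<sigma>) (\<lambda>x. x * x)"
    and integral_centered_normal_square: "(\<integral>x. x * x \<partial>centered_normal \<sigma>) = \<sigma>\<^sup>2"
proof -
  have h: "has_bochner_integral lborel (\<lambda>x. normal_density 0 \<sigma> x * (x * x)) (\<sigma>\<^sup>2)"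
    using normal_moment_even[OF assms, where k=1 and \<mu>=0] assms by (simp add: power2_eq_square)
  show "integrable (centered_normal \<sigma>) (\<lambda>x. x * x)"
    using h by (subst integrable_density) (auto simp: has_bochner_integral_iff)
  show "(\<integral>x. x * x \<partial>centered_normal \<sigma>) = \<sigma>\<^sup>2"
    using h by (subst integral_density) (auto simp: has_bochner_integral_iff)
qed

lemma prob_space_gauss_vec: "\<sigma> > 0 \<Longrightarrow> prob_space (gauss_vec \<sigma>)"
  unfolding gauss_vec_def by (intro prob_space_PiM prob_space_normal_density)

lemma measurable_gauss_vec_component [measurable]:
  "(\<lambda>x. x i) \<in> borel_measurable (gauss_vec \<sigma>)"
  unfolding gauss_vec_def by (simp cong: measurable_cong_sets)

lemma
  fixes f :: "'k::finite \<Rightarrow> real \<Rightarrow> real"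
  assumes "\<sigma> > 0" and "\<And>i. integrable (centered_normal \<sigma>) (f i)"
  shows integrable_gauss_vec_prod: "integrable (gauss_vec \<sigma>) (\<lambda>x. \<Prod>i\<in>UNIV. f i (x i))"
    and integral_gauss_vec_prod:
      "(\<integral>x. (\<Prod>i\<in>UNIV. f i (x i)) \<partial>gauss_vec \<sigma>) = (\<Prod>i\<in>UNIV. integral\<^sup>L (centered_normal \<sigma>) (f i))"
proof -
  interpret product_prob_space "\<lambda>_::'k. centered_normal \<sigma>" UNIV
    by (intro product_prob_spaceI prob_space_normal_density assms)
  show "integrable (gauss_vec \<sigma>) (\<lambda>x. \<Prod>i\<in>UNIV. f i (x i))"
    unfolding gauss_vec_def using product_integrable_prod[of UNIV f] assms(2) by simp
  show "(\<integral>x. (\<Prod>i\<in>UNIV. f i (x i)) \<partial>gauss_vec \<sigma>) = (\<Prod>i\<in>UNIV. integral\<^sup>L (centered_normal \<sigma>) (f i))"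
    unfolding gauss_vec_def using product_integral_prod[of UNIV f] assms(2) by simp
qed

lemma
  fixes a :: "'k::finite"
  assumes "\<sigma> > 0"
  shows integrable_gauss_vec_component: "integrable (gauss_vec \<sigma>) (\<lambda>x. x a)"
    and integral_gauss_vec_component: "(\<integral>x. x a \<partial>gauss_vec \<sigma>) = 0"
proof -
  interpret N: prob_space "centered_normal \<sigma>"
    using prob_space_normal_density[OF assms] .
  define f where "f i t = (if i = a then t else 1)" for i :: 'k and t :: real
  have f: "integrable (centered_normal \<sigma>) (f i)" for i
    by (cases "i = a") (simp_all add: f_def[abs_def] integrable_centered_normal_id[OF assms])
  have prod_f: "(\<Prod>i\<in>UNIV. f i (x i)) = x a" for x
    by (simp add: f_def prod.delta)
  show "integrable (gauss_vec \<sigma>) (\<lambda>x. x a)"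
    using integrable_gauss_vec_prod[where f = f, OF assms f] by (simp add: prod_f)
  have "integral\<^sup>L (centered_normal \<sigma>) (f a) = 0"
    using integral_centered_normal_id[OF assms] by (simp add: f_def[abs_def])
  then show "(\<integral>x. x a \<partial>gauss_vec \<sigma>) = 0"
    using integral_gauss_vec_prod[where f = f, OF assms f] by (auto simp: prod_f prod_zero_iff)
qed

lemma
  fixes a b :: "'k::finite"
  assumes "\<sigma> > 0"
  shows integrable_gauss_vec_covariance: "integrable (gauss_vec \<sigma>) (\<lambda>x. x a * x b)"
    and integral_gauss_vec_covariance:
      "(\<integral>x. x a * x b \<partial>gauss_vec \<sigma>) = (if a = b then \<sigma>\<^sup>2 else 0)"
proof -
  interpret N: prob_space "centered_normal \<sigma>"
    using prob_space_normal_density[OF assms] .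
  note moments = integrable_centered_normal_id[OF assms] integral_centered_normal_id[OF assms]
    integrable_centered_normal_square[OF assms] integral_centered_normal_square[OF assms]
  define f where "f i t = (if i = a then t else 1) * (if i = b then t else 1)" for i :: 'k and t :: real
  have f: "integrable (centered_normal \<sigma>) (f i)" for i
    by (cases "i = a"; cases "i = b") (simp_all add: f_def[abs_def] moments)
  have prod_f: "(\<Prod>i\<in>UNIV. f i (x i)) = x a * x b" for x
    by (simp add: f_def prod.distrib prod.delta)
  show "integrable (gauss_vec \<sigma>) (\<lambda>x. x a * x b)"
    using integrable_gauss_vec_prod[where f = f, OF assms f] by (simp add: prod_f)
  have "(\<Prod>i\<in>UNIV. integral\<^sup>L (centered_normal \<sigma>) (f i)) = (if a = b then \<sigma>\<^sup>2 else 0)"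
  proof (cases "a = b")
    case True
    then have "integral\<^sup>L (centered_normal \<sigma>) (f i) = (if i = a then \<sigma>\<^sup>2 else 1)" for i
      by (simp add: f_def[abs_def] moments N.prob_space[simplified])
    with True show ?thesis by (simp add: prod.delta)
  next
    case False
    then have "integral\<^sup>L (centered_normal \<sigma>) (f a) = 0"
      by (simp add: f_def[abs_def] moments)
    with False show ?thesis by (auto simp: prod_zero_iff)
  qed
  then show "(\<integral>x. x a * x b \<partial>gauss_vec \<sigma>) = (if a = b then \<sigma>\<^sup>2 else 0)"
    using integral_gauss_vec_prod[where f = f, OF assms f] by (simp add: prod_f)
qed

lemma
  fixes f :: "'a \<Rightarrow> real" and g :: "'b \<Rightarrow> real"
  assumes "sigma_finite_measure M1" "sigma_finite_measure M2"
    and f: "integrable M1 f" and g: "integrable M2 g"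
  shows integrable_pair_measure_mult: "integrable (M1 \<Otimes>\<^sub>M M2) (\<lambda>\<omega>. f (fst \<omega>) * g (snd \<omega>))"
    and integral_pair_measure_mult:
      "(\<integral>\<omega>. f (fst \<omega>) * g (snd \<omega>) \<partial>(M1 \<Otimes>\<^sub>M M2)) = integral\<^sup>L M1 f * integral\<^sup>L M2 g"
proof -
  interpret pair_sigma_finite M1 M2
    using assms(1,2) by (rule pair_sigma_finite.intro)
  have [measurable]: "f \<in> borel_measurable M1" "g \<in> borel_measurable M2"
    using f g by auto
  show int: "integrable (M1 \<Otimes>\<^sub>M M2) (\<lambda>\<omega>. f (fst \<omega>) * g (snd \<omega>))"
  proof (rule Fubini_integrable)
    have "(\<lambda>x. \<integral>y. norm (f (fst (x, y)) * g (snd (x, y))) \<partial>M2) = (\<lambda>x. \<bar>f x\<bar> * (\<integral>y. \<bar>g y\<bar> \<partial>M2))"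
      by (simp add: abs_mult)
    then show "integrable M1 (\<lambda>x. \<integral>y. norm (f (fst (x, y)) * g (snd (x, y))) \<partial>M2)"
      using f by simp
  qed (use g in simp_all)
  show "(\<integral>\<omega>. f (fst \<omega>) * g (snd \<omega>) \<partial>(M1 \<Otimes>\<^sub>M M2)) = integral\<^sup>L M1 f * integral\<^sup>L M2 g"
    using integral_fst'[OF int] by simp
qed

lemma
  fixes X :: "'i \<Rightarrow> 'a \<Rightarrow> real"
  assumes "finite I"
    and int: "\<And>i j. i \<in> I \<Longrightarrow> j \<in> I \<Longrightarrow> integrable M (\<lambda>\<omega>. X i \<omega> * X j \<omega>)"
    and cov: "\<And>i j. i \<in> I \<Longrightarrow> j \<in> I \<Longrightarrow> (\<integral>\<omega>. X i \<omega> * X j \<omega> \<partial>M) = (if i = j then v i else 0)"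
  shows integrable_square_sum_uncorrelated: "integrable M (\<lambda>\<omega>. (\<Sum>i\<in>I. w i * X i \<omega>)\<^sup>2)"
    and integral_square_sum_uncorrelated: "(\<integral>\<omega>. (\<Sum>i\<in>I. w i * X i \<omega>)\<^sup>2 \<partial>M) = (\<Sum>i\<in>I. (w i)\<^sup>2 * v i)"
proof -
  have expand: "(\<Sum>i\<in>I. w i * X i \<omega>)\<^sup>2 = (\<Sum>i\<in>I. \<Sum>j\<in>I. (w i * w j) * (X i \<omega> * X j \<omega>))" for \<omega>
    by (simp add: power2_eq_square sum_product mult_ac)
  show "integrable M (\<lambda>\<omega>. (\<Sum>i\<in>I. w i * X i \<omega>)\<^sup>2)"
    unfolding expand using int by (auto intro!: integrable_sum integrable_mult_right)
  have "(\<integral>\<omega>. (\<Sum>i\<in>I. w i * X i \<omega>)\<^sup>2 \<partial>M) = (\<Sum>i\<in>I. \<Sum>j\<in>I. (w i * w j) * (if i = j then v i else 0))"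
    unfolding expand using int cov
    by (simp add: integral_sum integrable_sum integrable_mult_right del: mult_zero_right)
  also have "\<dots> = (\<Sum>i\<in>I. (w i)\<^sup>2 * v i)"
    using \<open>finite I\<close> by (simp add: power2_eq_square if_distrib sum.delta cong: if_cong)
  finally show "(\<integral>\<omega>. (\<Sum>i\<in>I. w i * X i \<omega>)\<^sup>2 \<partial>M) = (\<Sum>i\<in>I. (w i)\<^sup>2 * v i)" .
qed

abbreviation signal_noise :: "real \<Rightarrow> (('d::finite \<Rightarrow> real) \<times> ('n::finite \<Rightarrow> real)) measure" where
  "signal_noise s2 \<equiv> gauss_vec 1 \<Otimes>\<^sub>M gauss_vec (sqrt s2)"

lemma
  fixes i j :: "'d::finite + 'n::finite"
  assumes "s2 > 0"
  shows integrable_signal_noise_covariance: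
      "integrable (signal_noise s2) (\<lambda>\<omega>. case_sum (fst \<omega>) (snd \<omega>) i * case_sum (fst \<omega>) (snd \<omega>) j)"
    and integral_signal_noise_covariance:
      "(\<integral>\<omega>. case_sum (fst \<omega>) (snd \<omega>) i * case_sum (fst \<omega>) (snd \<omega>) j \<partial>signal_noise s2)
         = (if i = j then case_sum (\<lambda>_. 1) (\<lambda>_. s2) i else 0)"
proof -
  have "sqrt s2 > 0"
    using assms by simp
  then have P: "prob_space (gauss_vec 1 :: ('d \<Rightarrow> real) measure)"
    "prob_space (gauss_vec (sqrt s2) :: ('n \<Rightarrow> real) measure)"
    by (simp_all add: prob_space_gauss_vec)
  interpret C: prob_space "gauss_vec 1 :: ('d \<Rightarrow> real) measure"
    using P(1) .
  interpret Z: prob_space "gauss_vec (sqrt s2) :: ('n \<Rightarrow> real) measure"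
    using P(2) .
  note S = P[THEN prob_space_imp_sigma_finite]
  note pair = integrable_pair_measure_mult[OF S] integral_pair_measure_mult[OF S]
  note moments = integrable_gauss_vec_component integral_gauss_vec_component
    integrable_gauss_vec_covariance integral_gauss_vec_covariance
  have "integrable (signal_noise s2) (\<lambda>\<omega>. case_sum (fst \<omega>) (snd \<omega>) i * case_sum (fst \<omega>) (snd \<omega>) j)
    \<and> (\<integral>\<omega>. case_sum (fst \<omega>) (snd \<omega>) i * case_sum (fst \<omega>) (snd \<omega>) j \<partial>signal_noise s2)
         = (if i = j then case_sum (\<lambda>_. 1) (\<lambda>_. s2) i else 0)"
  proof (cases i; cases j)
    fix a b assume "i = Inl a" "j = Inl b"
    then show ?thesis
      using pair[of "\<lambda>c. c a * c b" "\<lambda>_. 1"] by (simp add: moments Z.emeasure_space_1 Z.prob_space)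
  next
    fix a n assume "i = Inl a" "j = Inr n"
    then show ?thesis
      using pair[of "\<lambda>c. c a" "\<lambda>z. z n"] assms by (simp add: moments)
  next
    fix n a assume "i = Inr n" "j = Inl a"
    then show ?thesis
      using pair[of "\<lambda>c. c a" "\<lambda>z. z n"] assms by (simp add: moments mult.commute)
  next
    fix m n assume "i = Inr m" "j = Inr n"
    then show ?thesis
      using pair[of "\<lambda>_. 1" "\<lambda>z. z m * z n"] assms by (simp add: moments C.emeasure_space_1 C.prob_space)
  qed
  then show "integrable (signal_noise s2) (\<lambda>\<omega>. case_sum (fst \<omega>) (snd \<omega>) i * case_sum (fst \<omega>) (snd \<omega>) j)"
    and "(\<integral>\<omega>. case_sum (fst \<omega>) (snd \<omega>) i * case_sum (fst \<omega>) (snd \<omega>) j \<partial>signal_noise s2)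
         = (if i = j then case_sum (\<lambda>_. 1) (\<lambda>_. s2) i else 0)"
    by auto
qed

definition observation :: "real^'d::finite^'n::finite \<Rightarrow> ('d \<Rightarrow> real) \<times> ('n \<Rightarrow> real) \<Rightarrow> real^'n" where
  "observation U = (\<lambda>(c, z). U *v (\<chi> i. c i) + (\<chi> i. z i))"

lemma Q_dist_eq_distr_observation: "Q_dist U s2 = distr (signal_noise s2) borel (observation U)"
  unfolding Q_dist_def observation_def ..

lemma observation_nth: "observation U \<omega> $ k = (\<Sum>a\<in>UNIV. U$k$a * fst \<omega> a) + snd \<omega> k"
  by (cases \<omega>) (simp add: observation_def matrix_vector_mult_def)

lemma measurable_observation [measurable]:
  fixes U :: "real^'d::finite^'n::finite"
  shows "observation U \<in> borel_measurable (signal_noise s2)"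
proof (subst borel_measurable_euclidean_space, intro ballI)
  fix b :: "real^'n" assume "b \<in> Basis"
  then obtain k where b: "b = axis k 1"
    by (auto simp: Basis_vec_def)
  have "(\<lambda>\<omega>. observation U \<omega> \<bullet> b) = (\<lambda>\<omega>. (\<Sum>a\<in>UNIV. U$k$a * fst \<omega> a) + snd \<omega> k)"
    by (simp add: b inner_axis observation_nth)
  also have "\<dots> \<in> borel_measurable (signal_noise s2)"
    by measurable
  finally show "(\<lambda>\<omega>. observation U \<omega> \<bullet> b) \<in> borel_measurable (signal_noise s2)" .
qed

lemma matrix_vector_mult_observation_nth:
  "(M *v observation U \<omega>) $ k
     = (\<Sum>i\<in>UNIV. case_sum (\<lambda>a. (M ** U)$k$a) (\<lambda>j. M$k$j) i * case_sum (fst \<omega>) (snd \<omega>) i)"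
proof -
  have "(M *v observation U \<omega>) $ k
      = (\<Sum>j\<in>UNIV. \<Sum>a\<in>UNIV. M$k$j * U$j$a * fst \<omega> a) + (\<Sum>j\<in>UNIV. M$k$j * snd \<omega> j)"
    by (simp add: matrix_vector_mult_def observation_nth distrib_left sum.distrib sum_distrib_left mult_ac)
  also have "(\<Sum>j\<in>UNIV. \<Sum>a\<in>UNIV. M$k$j * U$j$a * fst \<omega> a) = (\<Sum>a\<in>UNIV. (M ** U)$k$a * fst \<omega> a)"
    by (subst sum.swap) (simp add: matrix_matrix_mult_def sum_distrib_right)
  finally show ?thesis
    by (simp add: UNIV_Plus_UNIV[symmetric] sum.Plus del: UNIV_Plus_UNIV)
qed

lemma norm_vec_power2: "(norm x)\<^sup>2 = (\<Sum>i\<in>UNIV. (norm (x $ i))\<^sup>2)"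
  unfolding norm_vec_def L2_set_def by (simp add: sum_nonneg)

lemma norm_matrix_power2: "(norm (A :: real^'m::finite^'n::finite))\<^sup>2 = (\<Sum>i\<in>UNIV. \<Sum>j\<in>UNIV. (A$i$j)\<^sup>2)"
  by (simp add: norm_vec_power2)

lemma
  fixes U :: "real^'d::finite^'n::finite" and M :: "real^'n^'m::finite"
  assumes "s2 > 0"
  shows integrable_Q_dist_norm_power2: "integrable (Q_dist U s2) (\<lambda>y. (norm (M *v y))\<^sup>2)"
    and integral_Q_dist_norm_power2:
      "(\<integral>y. (norm (M *v y))\<^sup>2 \<partial>Q_dist U s2) = (norm (M ** U))\<^sup>2 + s2 * (norm M)\<^sup>2"
proof -
  \<comment> \<open>\<open>(c, z)\<close> is read as one uncorrelated random vector indexed by \<open>'d + 'n\<close>\<close>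
  let ?X = "\<lambda>i \<omega>. case_sum (fst \<omega>) (snd \<omega>) i"
  let ?w = "\<lambda>k. case_sum (\<lambda>a. (M ** U)$k$a) (\<lambda>j. M$k$j)"
  let ?v = "case_sum (\<lambda>_. 1) (\<lambda>_. s2)"
  note uncorrelated = integrable_square_sum_uncorrelated integral_square_sum_uncorrelated
  note summand = uncorrelated[where X = ?X and v = ?v and I = UNIV
      and M = "signal_noise s2 :: (('d \<Rightarrow> real) \<times> ('n \<Rightarrow> real)) measure",
      OF finite integrable_signal_noise_covariance[OF assms] integral_signal_noise_covariance[OF assms]]
  have [measurable]: "(\<lambda>y. (norm (M *v y))\<^sup>2) \<in> borel_measurable borel"
    by (intro borel_measurable_continuous_onI continuous_intros)
  have expand: "(norm (M *v observation U \<omega>))\<^sup>2 = (\<Sum>k\<in>UNIV. (\<Sum>i\<in>UNIV. ?w k i * ?X i \<omega>)\<^sup>2)" for \<omega>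
    by (simp add: norm_vec_power2 matrix_vector_mult_observation_nth)
  have "integrable (signal_noise s2) (\<lambda>\<omega>. (norm (M *v observation U \<omega>))\<^sup>2)"
    unfolding expand by (rule Bochner_Integration.integrable_sum, rule summand(1))
  then show "integrable (Q_dist U s2) (\<lambda>y. (norm (M *v y))\<^sup>2)"
    unfolding Q_dist_eq_distr_observation by (subst integrable_distr_eq) auto
  have "(\<integral>y. (norm (M *v y))\<^sup>2 \<partial>Q_dist U s2) = (\<integral>\<omega>. (norm (M *v observation U \<omega>))\<^sup>2 \<partial>signal_noise s2)"
    unfolding Q_dist_eq_distr_observation by (subst integral_distr) auto
  also have "\<dots> = (\<Sum>k\<in>UNIV. \<Sum>i\<in>UNIV. (?w k i)\<^sup>2 * ?v i)"
    unfolding expand using summand by (simp add: integral_sum)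
  also have "\<dots> = (norm (M ** U))\<^sup>2 + s2 * (norm M)\<^sup>2"
    by (simp add: UNIV_Plus_UNIV[symmetric] sum.Plus norm_matrix_power2 sum.distrib sum_distrib_left mult_ac
        del: UNIV_Plus_UNIV)
  finally show "(\<integral>y. (norm (M *v y))\<^sup>2 \<partial>Q_dist U s2) = (norm (M ** U))\<^sup>2 + s2 * (norm M)\<^sup>2" .
qed

lemma matrix_diff_rdistrib: "(A - B) ** C = A ** C - B ** (C :: 'a::ring_1^'n^'m)"
  by (simp add: matrix_matrix_mult_def vec_eq_iff sum_subtractf left_diff_distrib)

lemma inner_matrix_eq_trace: "inner A B = trace (transpose A ** (B :: real^'m::finite^'n::finite))"
  unfolding inner_vec_def trace_def matrix_matrix_mult_def transpose_def
  by (simp add: sum.swap[of _ "UNIV :: 'n set"])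

lemma
  fixes U :: "real^'d::finite^'n::finite"
  assumes "transpose U ** U = mat 1"
  shows projection_mult_orthonormal: "(U ** transpose U) ** U = U"
    and projection_idempotent: "(U ** transpose U) ** (U ** transpose U) = U ** transpose U"
    and trace_projection_orthonormal: "trace (U ** transpose U) = real CARD('d)"
    and norm_power2_orthonormal: "(norm U)\<^sup>2 = real CARD('d)"
proof -
  show "(U ** transpose U) ** U = U"
    by (metis assms matrix_mul_assoc matrix_mul_rid)
  then show "(U ** transpose U) ** (U ** transpose U) = U ** transpose U"
    by (metis matrix_mul_assoc)
  show "trace (U ** transpose U) = real CARD('d)"
    using assms by (simp add: trace_mul_sym[of U] trace_I)
  show "(norm U)\<^sup>2 = real CARD('d)"
    using assms by (simp add: power2_norm_eq_inner inner_matrix_eq_trace trace_I)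
qed

lemma norm_power2_shrink_mult_orthonormal:
  fixes U :: "real^'d::finite^'n::finite"
  assumes "transpose U ** U = mat 1"
  shows "(norm ((mat 1 - \<beta> *\<^sub>R (U ** transpose U)) ** U))\<^sup>2 = (1 - \<beta>)\<^sup>2 * real CARD('d)"
proof -
  have "(mat 1 - \<beta> *\<^sub>R (U ** transpose U)) ** U = (1 - \<beta>) *\<^sub>R U"
    using projection_mult_orthonormal[OF assms]
    by (simp add: matrix_diff_rdistrib scalar_matrix_assoc[symmetric] algebra_simps)
  then show ?thesis
    by (simp add: power_mult_distrib norm_power2_orthonormal[OF assms])
qed

lemma norm_power2_shrink_orthonormal:
  fixes U :: "real^'d::finite^'n::finite"
  assumes "transpose U ** U = mat 1"
  shows "(norm (mat 1 - \<beta> *\<^sub>R (U ** transpose U)))\<^sup>2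
    = real CARD('n) - 2 * \<beta> * real CARD('d) + \<beta>\<^sup>2 * real CARD('d)"
proof -
  let ?P = "U ** transpose U"
  have "inner ?P ?P = trace ?P"
    by (simp add: inner_matrix_eq_trace matrix_transpose_mul projection_idempotent[OF assms])
  moreover have "inner (mat 1) ?P = trace ?P"
    by (simp add: inner_matrix_eq_trace)
  moreover have "inner (mat 1) (mat 1 :: real^'n^'n) = real CARD('n)"
    by (simp add: inner_matrix_eq_trace trace_I)
  ultimately show ?thesis
    unfolding power2_norm_eq_inner
    by (simp add: inner_diff_left inner_diff_right inner_commute
        trace_projection_orthonormal[OF assms] power2_eq_square algebra_simps)
qed

lemma L_SS_eq_norm_shrink:
  fixes U :: "real^'d::finite^'n::finite"
  shows "L_SS \<alpha> U = (\<lambda>y. (norm ((mat 1 - \<alpha> *\<^sub>R (U ** transpose U)) *v y))\<^sup>2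
     + (2 * \<alpha> * real CARD('d) / (real CARD('n) - real CARD('d))) * (norm ((mat 1 - U ** transpose U) *v y))\<^sup>2)"
  by (simp add: L_SS_def fun_eq_iff matrix_vector_mult_diff_rdistrib scaleR_matrix_vector_assoc)

lemma integrable_L_SS: "s2 > 0 \<Longrightarrow> integrable (Q_dist U s2) (L_SS \<alpha> U)"
  unfolding L_SS_eq_norm_shrink
  by (intro Bochner_Integration.integrable_add integrable_mult_right integrable_Q_dist_norm_power2)

lemma integral_L_SS:
  fixes U :: "real^'d::finite^'n::finite"
  assumes "CARD('d) < CARD('n)" and "transpose U ** U = mat 1" and "s2 > 0"
  shows "(\<integral>y. L_SS \<alpha> U y \<partial>Q_dist U s2) = real CARD('d) * ((1 - \<alpha>)\<^sup>2 + s2 * \<alpha>\<^sup>2) + s2 * real CARD('n)"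
proof -
  let ?P = "U ** transpose U"
  let ?c = "2 * \<alpha> * real CARD('d) / (real CARD('n) - real CARD('d))"
  note integrable = integrable_Q_dist_norm_power2[OF assms(3)]
  have "(\<integral>y. L_SS \<alpha> U y \<partial>Q_dist U s2)
      = (\<integral>y. (norm ((mat 1 - \<alpha> *\<^sub>R ?P) *v y))\<^sup>2 \<partial>Q_dist U s2)
        + ?c * (\<integral>y. (norm ((mat 1 - ?P) *v y))\<^sup>2 \<partial>Q_dist U s2)"
    unfolding L_SS_eq_norm_shrink
    by (simp only: Bochner_Integration.integral_add[OF integrable integrable_mult_right[OF integrable]]
        integral_mult_right_zero)
  also have "\<dots> = (1 - \<alpha>)\<^sup>2 * real CARD('d)
        + s2 * (real CARD('n) - 2 * \<alpha> * real CARD('d) + \<alpha>\<^sup>2 * real CARD('d))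
        + ?c * (s2 * (real CARD('n) - real CARD('d)))"
    using norm_power2_shrink_orthonormal[OF assms(2), of 1]
      norm_power2_shrink_mult_orthonormal[OF assms(2), of 1]
    by (simp add: integral_Q_dist_norm_power2[OF assms(3)] norm_power2_shrink_orthonormal[OF assms(2)]
        norm_power2_shrink_mult_orthonormal[OF assms(2)])
  also have "\<dots> = real CARD('d) * ((1 - \<alpha>)\<^sup>2 + s2 * \<alpha>\<^sup>2) + s2 * real CARD('n)"
    using assms(1) by (simp add: field_simps power2_eq_square)
  finally show ?thesis .
qed

lemma shrinkage_risk_minimum:
  fixes s \<alpha> :: real
  assumes "1 + s > 0"
  shows "(1 - 1 / (1 + s))\<^sup>2 + s * (1 / (1 + s))\<^sup>2 \<le> (1 - \<alpha>)\<^sup>2 + s * \<alpha>\<^sup>2"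
proof -
  define a where "a = 1 / (1 + s)"
  have a: "(1 + s) * a = 1"
    using assms by (simp add: a_def)
  have "(1 - a)\<^sup>2 + s * a\<^sup>2 = 1 - 2 * a + ((1 + s) * a) * a"
    by (simp add: power2_eq_square algebra_simps)
  moreover have "(1 + s) * (\<alpha> - a)\<^sup>2 = (1 + s) * \<alpha>\<^sup>2 - 2 * \<alpha> * ((1 + s) * a) + ((1 + s) * a) * a"
    by (simp add: power2_eq_square algebra_simps)
  ultimately have "(1 - \<alpha>)\<^sup>2 + s * \<alpha>\<^sup>2 = ((1 - a)\<^sup>2 + s * a\<^sup>2) + (1 + s) * (\<alpha> - a)\<^sup>2"
    unfolding a by (simp add: power2_eq_square algebra_simps)
  then show ?thesis
    using assms by (simp add: a_def)
qed

theorem mainTheorem2: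
  fixes U :: "real^'d::finite^'n::finite" and s2 :: real
  assumes "CARD('d) < CARD('n)"
    and "transpose U ** U = mat 1"
    and "s2 > 0"
  shows "(\<forall>\<alpha>\<in>{0..1}. integrable (Q_dist U s2) (L_SS \<alpha> U))
       \<and> (\<forall>\<alpha>\<in>{0..1}. (\<integral>y. L_SS (1 / (1 + s2)) U y \<partial>Q_dist U s2)
                        \<le> (\<integral>y. L_SS \<alpha> U y \<partial>Q_dist U s2))"
proof -
  have "(\<integral>y. L_SS (1 / (1 + s2)) U y \<partial>Q_dist U s2) \<le> (\<integral>y. L_SS \<alpha> U y \<partial>Q_dist U s2)" for \<alpha>
    unfolding integral_L_SS[OF assms]
    using shrinkage_risk_minimum[of s2 \<alpha>] assms(3) by (simp add: mult_left_mono)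
  then show ?thesis
    using integrable_L_SS[OF assms(3)] by blast
qed

end
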